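(* In the setting of a chain BN $X_0\to X_1\to\dots\to X_{n+1}$ with fixed root marginal $P(X_0=1)=q\in(0,1)$, all non-root nodes sharing the table $P(X_i=1\mid X_{i-1}=b)=p_b$, and $f(x)=x_{n+1}$: (1) if $p_0=10^{-5}$ and $p_1=0.5+10^{-5}+0.353$ (so $D_\mu=0.853$), then $D_\mu+D_\sigma>1.2$ and $L_1(f)=\Omega(1.2^n)$; (2) for every $c\in(0,0.0246]$, if $p_0=c$ and $p_1=0.5+c+2\sqrt c$, then $D_\mu+D_\sigma>1+c$ and $L_1(f)=\Omega((1+c)^n)$.
   Context: $D_\mu=|p_1-p_0|$ and $D_\sigma=|\sqrt{p_1(1-p_1)}-\sqrt{p_0(1-p_0)}|$. For a BN, $\mu_{v,x_{\operatorname{pa}(v)}}=P(X_v=1\mid X_{\operatorname{pa}(v)}=x_{\operatorname{pa}(v)})$, $\sigma_{v,x_{\operatorname{pa}(v)}}=\sqrt{\mu_{v,x_{\operatorname{pa}(v)}}(1-\mu_{v,x_{\operatorname{pa}(v)}})}$, the BN-induced basis is $\phi_v(x)=(x_v-\mu_{v,x_{\operatorname{pa}(v)}})/\sigma_{v,x_{\operatorname{pa}(v)}}$, $\phi_S=\prod_{v\in S}\phi_v$; $\hat f_S=\mathbb{E}[f(X)\phi_S(X)]$; $L_1(f)=\sum_S|\hat f_S|$. Asymptotics are as $n\to\infty$ with $q$ fixed. *)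

theory Defs
  imports Complex_Main "HOL-Library.FuncSet" "HOL-Library.Landau_Symbols"
begin

definition chain_assignments :: "nat \<Rightarrow> (nat \<Rightarrow> real) set" where
  "chain_assignments n = PiE {0..n+1} (\<lambda>_. {0, 1})"

definition chain_mu :: "real \<Rightarrow> real \<Rightarrow> real \<Rightarrow> (nat \<Rightarrow> real) \<Rightarrow> nat \<Rightarrow> real" where
  "chain_mu q p0 p1 x v = (if v = 0 then q else (if x (v - 1) = 1 then p1 else p0))"

definition chain_sigma :: "real \<Rightarrow> real \<Rightarrow> real \<Rightarrow> (nat \<Rightarrow> real) \<Rightarrow> nat \<Rightarrow> real" where
  "chain_sigma q p0 p1 x v = sqrt (chain_mu q p0 p1 x v * (1 - chain_mu q p0 p1 x v))"

definition chain_prob :: "real \<Rightarrow> real \<Rightarrow> real \<Rightarrow> nat \<Rightarrow> (nat \<Rightarrow> real) \<Rightarrow> real" where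
  "chain_prob q p0 p1 n x =
     (\<Prod>v\<in>{0..n+1}. (if x v = 1 then chain_mu q p0 p1 x v else 1 - chain_mu q p0 p1 x v))"

definition chain_phi :: "real \<Rightarrow> real \<Rightarrow> real \<Rightarrow> nat \<Rightarrow> (nat \<Rightarrow> real) \<Rightarrow> real" where
  "chain_phi q p0 p1 v x = (x v - chain_mu q p0 p1 x v) / chain_sigma q p0 p1 x v"

definition chain_phiS :: "real \<Rightarrow> real \<Rightarrow> real \<Rightarrow> nat set \<Rightarrow> (nat \<Rightarrow> real) \<Rightarrow> real" where
  "chain_phiS q p0 p1 S x = (\<Prod>v\<in>S. chain_phi q p0 p1 v x)"

definition chain_fhat :: "real \<Rightarrow> real \<Rightarrow> real \<Rightarrow> nat \<Rightarrow> nat set \<Rightarrow> real" where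
  "chain_fhat q p0 p1 n S =
     (\<Sum>x\<in>chain_assignments n. chain_prob q p0 p1 n x * x (n+1) * chain_phiS q p0 p1 S x)"

definition chain_L1 :: "real \<Rightarrow> real \<Rightarrow> real \<Rightarrow> nat \<Rightarrow> real" where
  "chain_L1 q p0 p1 n = (\<Sum>S\<in>Pow {0..n+1}. \<bar>chain_fhat q p0 p1 n S\<bar>)"

definition D_mu :: "real \<Rightarrow> real \<Rightarrow> real" where
  "D_mu p0 p1 = \<bar>p1 - p0\<bar>"

definition D_sigma :: "real \<Rightarrow> real \<Rightarrow> real" where
  "D_sigma p0 p1 = \<bar>sqrt (p1 * (1 - p1)) - sqrt (p0 * (1 - p0))\<bar>"

end

theory Submission
  imports Defs
begin

text \<open>Dropping the absolute values and all sets \<open>S\<close> containing the root bounds \<open>L1(f)\<close>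
  from below by the sum of the coefficients over \<open>S \<subseteq> {1..n+1}\<close>, which is
  \<open>E[X(n+1) \<Prod>v\<ge>1. (1 + \<phi>v)]\<close>.  Each factor \<open>P(x v | x (v-1)) (1 + \<phi>v(x))\<close> depends only on
  \<open>(x (v-1), x v)\<close>: it is the entry of a 2\<times>2 matrix with rows summing to 1 whose weight on
  state 1 from state \<open>b\<close> is \<open>p_b + \<sigma>_b\<close>.  The expectation is thus an iterated transfer
  operator with eigenvalues 1 and \<open>(p1 + \<sigma>1) - (p0 + \<sigma>0)\<close>, which is \<open>D\<mu> + D\<sigma>\<close> when
  \<open>p0 \<le> p1\<close> and \<open>\<sigma>0 \<le> \<sigma>1\<close>; so \<open>L1(f)\<close> grows like \<open>(D\<mu> + D\<sigma>)^n\<close> once this exceeds 1.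
  For the second family, with \<open>s = sqrt c\<close>, one has
  \<open>p1 (1 - p1) - (1/2 - s + s^2)^2 = s (1 - 6s - 2s^2 - 2s^3) > 0\<close> and \<open>\<sigma>0 \<le> s\<close>,
  whence \<open>D\<mu> + D\<sigma> > 1 + s^2\<close>.\<close>

lemma sum_PiE_insert:
  assumes "k \<notin> A" "finite A" "finite B"
  shows "(\<Sum>x\<in>PiE (insert k A) (\<lambda>_. B). F x) = (\<Sum>y\<in>B. \<Sum>g\<in>PiE A (\<lambda>_. B). F (g(k := y)))"
proof -
  have "(\<Sum>x\<in>PiE (insert k A) (\<lambda>_. B). F x)
      = (\<Sum>p\<in>B \<times> PiE A (\<lambda>_. B). F ((\<lambda>(y, g). g(k := y)) p))"
    unfolding PiE_insert_eq by (subst sum.reindex[OF inj_combinator[OF assms(1)]]) (simp add: o_def)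
  also have "\<dots> = (\<Sum>y\<in>B. \<Sum>g\<in>PiE A (\<lambda>_. B). F (g(k := y)))"
    by (simp add: sum.cartesian_product case_prod_unfold)
  finally show ?thesis .
qed

definition transfer :: "'a set \<Rightarrow> ('a \<Rightarrow> 'a \<Rightarrow> real) \<Rightarrow> ('a \<Rightarrow> real) \<Rightarrow> 'a \<Rightarrow> real" where
  "transfer B K e s = (\<Sum>c\<in>B. K s c * e c)"

lemma sum_paths_transfer:
  assumes "finite B"
  shows "(\<Sum>x\<in>PiE {0..m} (\<lambda>_. B). h (x 0) * (\<Prod>v\<in>{1..m}. K (x (v - 1)) (x v)) * e (x m))
       = (\<Sum>s\<in>B. h s * (transfer B K ^^ m) e s)"
proof (induction m arbitrary: e)
  case 0
  have "{0..0::nat} = insert 0 {}" by auto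
  then show ?case using assms by (simp add: sum_PiE_insert)
next
  case (Suc m)
  have "(\<Sum>x\<in>PiE {0..Suc m} (\<lambda>_. B). h (x 0) * (\<Prod>v\<in>{1..Suc m}. K (x (v - 1)) (x v)) * e (x (Suc m)))
      = (\<Sum>y\<in>B. \<Sum>g\<in>PiE {0..m} (\<lambda>_. B).
           h (g 0) * (\<Prod>v\<in>{1..m}. K (g (v - 1)) (g v)) * (K (g m) y * e y))"
  proof -
    have path: "(\<Prod>v\<in>{1..Suc m}. K ((g(Suc m := y)) (v - 1)) ((g(Suc m := y)) v))
        = (\<Prod>v\<in>{1..m}. K (g (v - 1)) (g v)) * K (g m) y" for g y
    proof -
      have "(\<Prod>v\<in>{1..m}. K ((g(Suc m := y)) (v - 1)) ((g(Suc m := y)) v))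
          = (\<Prod>v\<in>{1..m}. K (g (v - 1)) (g v))"
        by (rule prod.cong) auto
      then show ?thesis by (subst atLeastAtMostSuc_conv) (auto simp: mult.commute)
    qed
    have ins: "{0..Suc m} = insert (Suc m) {0..m}" by auto
    have "(\<Sum>x\<in>PiE {0..Suc m} (\<lambda>_. B).
                 h (x 0) * (\<Prod>v\<in>{1..Suc m}. K (x (v - 1)) (x v)) * e (x (Suc m)))
        = (\<Sum>y\<in>B. \<Sum>g\<in>PiE {0..m} (\<lambda>_. B). h ((g(Suc m := y)) 0) *
             (\<Prod>v\<in>{1..Suc m}. K ((g(Suc m := y)) (v - 1)) ((g(Suc m := y)) v)) * e y)"
      unfolding ins using assms by (subst sum_PiE_insert) auto
    then show ?thesis unfolding path by (simp add: mult.assoc)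
  qed
  also have "\<dots> = (\<Sum>g\<in>PiE {0..m} (\<lambda>_. B).
                    h (g 0) * (\<Prod>v\<in>{1..m}. K (g (v - 1)) (g v)) * transfer B K e (g m))"
    by (subst sum.swap) (simp add: transfer_def sum_distrib_left)
  also have "\<dots> = (\<Sum>s\<in>B. h s * (transfer B K ^^ m) (transfer B K e) s)"
    by (rule Suc.IH)
  finally show ?case by (simp add: funpow_Suc_right del: funpow.simps)
qed

definition bit_kernel :: "real \<Rightarrow> real \<Rightarrow> real \<Rightarrow> real \<Rightarrow> real" where
  "bit_kernel a b s c = (let g = if s = 1 then b else a in if c = 1 then g else 1 - g)"

text \<open>Multiplied through by \<open>b - a - 1\<close>, the closed form needs no hypothesis \<open>b - a \<noteq> 1\<close>.\<close>

lemma transfer_bit_kernel_closed_form: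
  "(b - a - 1) * (transfer {0, 1} (bit_kernel a b) ^^ m) (\<lambda>c. of_bool (c = 1)) s
     = (b - a) ^ m * (if s = 1 then b - 1 else a) - a"
proof (induction m arbitrary: s)
  case 0
  show ?case by simp
next
  case (Suc m)
  define v where "v = (transfer {0, 1} (bit_kernel a b) ^^ m) (\<lambda>c. of_bool (c = 1))"
  define g where "g = (if s = 1 then b else a)"
  have "(b - a - 1) * (transfer {0, 1} (bit_kernel a b) ^^ Suc m) (\<lambda>c. of_bool (c = 1)) s
      = (1 - g) * ((b - a - 1) * v 0) + g * ((b - a - 1) * v 1)"
    by (simp add: v_def g_def transfer_def bit_kernel_def algebra_simps)
  also have "\<dots> = (b - a) ^ m * (a + g * (b - 1 - a)) - a"
    unfolding v_def Suc.IH by (simp add: algebra_simps)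
  also have "a + g * (b - 1 - a) = (b - a) * (if s = 1 then b - 1 else a)"
    by (simp add: g_def algebra_simps)
  finally show ?case by simp
qed

definition mu_plus_sigma :: "real \<Rightarrow> real" where
  "mu_plus_sigma p = p + sqrt (p * (1 - p))"

lemma bernoulli_times_phi_plus_one:
  fixes p c :: real
  assumes "0 < p" "p < 1" "c = 0 \<or> c = 1"
  shows "(if c = 1 then p else 1 - p) * ((c - p) / sqrt (p * (1 - p)) + 1)
       = (if c = 1 then mu_plus_sigma p else 1 - mu_plus_sigma p)"
proof -
  define \<sigma> where "\<sigma> = sqrt (p * (1 - p))"
  have "\<sigma> > 0" using assms by (simp add: \<sigma>_def)
  moreover have "\<sigma> * \<sigma> = p * (1 - p)" using assms by (simp add: \<sigma>_def)
  ultimately have "(if c = 1 then p else 1 - p) * ((c - p) / \<sigma> + 1)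
      = (if c = 1 then p + \<sigma> else 1 - (p + \<sigma>))"
    using assms(3) by (auto simp: field_simps)
  then show ?thesis by (simp add: \<sigma>_def mu_plus_sigma_def)
qed

lemma chain_factor_phi_plus_one:
  assumes "0 < p0" "p0 < 1" "0 < p1" "p1 < 1" "v \<noteq> 0" "x v = 0 \<or> x v = 1"
  shows "(if x v = 1 then chain_mu q p0 p1 x v else 1 - chain_mu q p0 p1 x v)
           * (chain_phi q p0 p1 v x + 1)
       = bit_kernel (mu_plus_sigma p0) (mu_plus_sigma p1) (x (v - 1)) (x v)"
proof -
  define p where "p = (if x (v - 1) = 1 then p1 else p0)"
  have mu: "chain_mu q p0 p1 x v = p" using assms(5) by (simp add: p_def chain_mu_def)
  have "0 < p" "p < 1" using assms by (auto simp: p_def)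
  then have "(if x v = 1 then p else 1 - p) * (chain_phi q p0 p1 v x + 1)
      = (if x v = 1 then mu_plus_sigma p else 1 - mu_plus_sigma p)"
    using bernoulli_times_phi_plus_one[OF _ _ assms(6)] by (simp add: chain_phi_def chain_sigma_def mu)
  also have "\<dots> = bit_kernel (mu_plus_sigma p0) (mu_plus_sigma p1) (x (v - 1)) (x v)"
    by (simp add: bit_kernel_def p_def)
  finally show ?thesis unfolding mu .
qed

lemma chain_prob_times_prod_phi_plus_one:
  assumes "0 < p0" "p0 < 1" "0 < p1" "p1 < 1" "x \<in> chain_assignments n"
  shows "chain_prob q p0 p1 n x * (\<Prod>v\<in>{1..n+1}. chain_phi q p0 p1 v x + 1)
       = (if x 0 = 1 then q else 1 - q)
           * (\<Prod>v\<in>{1..n+1}. bit_kernel (mu_plus_sigma p0) (mu_plus_sigma p1) (x (v - 1)) (x v))"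
proof -
  let ?P = "\<lambda>v. if x v = 1 then chain_mu q p0 p1 x v else 1 - chain_mu q p0 p1 x v"
  have "{0..n+1} = insert 0 {1..n+1}" by auto
  then have "chain_prob q p0 p1 n x = (if x 0 = 1 then q else 1 - q) * (\<Prod>v\<in>{1..n+1}. ?P v)"
    by (simp add: chain_prob_def chain_mu_def)
  moreover have "(\<Prod>v\<in>{1..n+1}. ?P v) * (\<Prod>v\<in>{1..n+1}. chain_phi q p0 p1 v x + 1)
      = (\<Prod>v\<in>{1..n+1}. bit_kernel (mu_plus_sigma p0) (mu_plus_sigma p1) (x (v - 1)) (x v))"
    unfolding prod.distrib[symmetric]
  proof (rule prod.cong[OF refl], rule chain_factor_phi_plus_one[OF assms(1-4)])
    fix v assume "v \<in> {1..n+1}"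
    then show "v \<noteq> 0" "x v = 0 \<or> x v = 1"
      using assms(5) by (auto simp: chain_assignments_def PiE_iff)
  qed
  ultimately show ?thesis by (simp add: mult.assoc)
qed

lemma sum_chain_fhat_nonroot_eq_transfer:
  fixes n :: nat
  assumes "0 < p0" "p0 < 1" "0 < p1" "p1 < 1"
  defines "T \<equiv> transfer {0, 1} (bit_kernel (mu_plus_sigma p0) (mu_plus_sigma p1)) ^^ (n + 1)"
    and "e \<equiv> \<lambda>c. of_bool (c = 1)"
  shows "(\<Sum>S\<in>Pow {1..n+1}. chain_fhat q p0 p1 n S) = (1 - q) * T e 0 + q * T e 1"
proof -
  let ?K = "bit_kernel (mu_plus_sigma p0) (mu_plus_sigma p1)"
  let ?h = "\<lambda>s::real. if s = 1 then q else 1 - q"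
  have "(\<Sum>S\<in>Pow {1..n+1}. chain_fhat q p0 p1 n S)
      = (\<Sum>x\<in>chain_assignments n. chain_prob q p0 p1 n x * x (n+1)
           * (\<Sum>S\<in>Pow {1..n+1}. chain_phiS q p0 p1 S x))"
    unfolding chain_fhat_def by (subst sum.swap) (simp add: sum_distrib_left)
  also have "\<dots> = (\<Sum>x\<in>chain_assignments n. chain_prob q p0 p1 n x * x (n+1)
                    * (\<Prod>v\<in>{1..n+1}. chain_phi q p0 p1 v x + 1))"
    unfolding prod_add[OF finite_atLeastAtMost] by (simp add: chain_phiS_def)
  also have "\<dots> = (\<Sum>x\<in>PiE {0..n+1} (\<lambda>_. {0, 1}).
                    ?h (x 0) * (\<Prod>v\<in>{1..n+1}. ?K (x (v - 1)) (x v)) * e (x (n+1)))"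
    unfolding chain_assignments_def[symmetric]
  proof (rule sum.cong[OF refl])
    fix x assume x: "x \<in> chain_assignments n"
    then have "x (n+1) = e (x (n+1))" by (auto simp: e_def chain_assignments_def PiE_iff)
    then show "chain_prob q p0 p1 n x * x (n+1) * (\<Prod>v\<in>{1..n+1}. chain_phi q p0 p1 v x + 1)
        = ?h (x 0) * (\<Prod>v\<in>{1..n+1}. ?K (x (v - 1)) (x v)) * e (x (n+1))"
      using chain_prob_times_prod_phi_plus_one[OF assms(1-4) x] by (simp add: mult_ac)
  qed
  also have "\<dots> = (1 - q) * T e 0 + q * T e 1"
    unfolding T_def by (subst sum_paths_transfer) simp_all
  finally show ?thesis .
qed

lemma sum_chain_fhat_nonroot_closed_form:
  assumes "0 < p0" "p0 < 1" "0 < p1" "p1 < 1"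
  defines "a \<equiv> mu_plus_sigma p0" and "b \<equiv> mu_plus_sigma p1"
  shows "(b - a - 1) * (\<Sum>S\<in>Pow {1..n+1}. chain_fhat q p0 p1 n S)
       = ((1 - q) * a + q * (b - 1)) * (b - a) ^ (n + 1) - a"
proof -
  let ?T = "transfer {0, 1} (bit_kernel a b) ^^ (n + 1)"
  let ?e = "\<lambda>c::real. of_bool (c = 1) :: real"
  have "(b - a - 1) * (\<Sum>S\<in>Pow {1..n+1}. chain_fhat q p0 p1 n S)
      = (1 - q) * ((b - a - 1) * ?T ?e 0) + q * ((b - a - 1) * ?T ?e 1)"
    unfolding sum_chain_fhat_nonroot_eq_transfer[OF assms(1-4)] a_def b_def
    by (simp add: algebra_simps del: funpow.simps)
  then show ?thesis
    unfolding transfer_bit_kernel_closed_form by (simp add: algebra_simps)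
qed

lemma sum_nonroot_le_chain_L1:
  "(\<Sum>S\<in>Pow {1..n+1}. chain_fhat q p0 p1 n S) \<le> chain_L1 q p0 p1 n"
proof -
  have "(\<Sum>S\<in>Pow {1..n+1}. chain_fhat q p0 p1 n S) \<le> (\<Sum>S\<in>Pow {1..n+1}. \<bar>chain_fhat q p0 p1 n S\<bar>)"
    by (rule sum_mono) simp
  also have "\<dots> \<le> chain_L1 q p0 p1 n"
    unfolding chain_L1_def by (rule sum_mono2) auto
  finally show ?thesis .
qed

lemma bigomega_power_of_lower_bound:
  fixes f :: "nat \<Rightarrow> real"
  assumes lower: "\<And>n. c + B * \<rho> ^ n \<le> f n" and "0 < B" "1 < \<rho>"
  shows "f \<in> \<Omega>(\<lambda>n. \<rho> ^ n)"
proof (rule landau_omega.bigI)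
  show "0 < B / 2" using assms(2) by simp
  have "filterlim (\<lambda>n. norm (\<rho> ^ n)) at_top sequentially"
    using assms(3) by (intro filterlim_at_infinity_imp_norm_at_top filterlim_realpow_sequentially_gt1) simp
  then have "eventually (\<lambda>n. - 2 * c / B \<le> \<rho> ^ n) sequentially"
    using assms(3) by (simp add: filterlim_at_top)
  then show "eventually (\<lambda>n. B / 2 * norm (\<rho> ^ n) \<le> norm (f n)) sequentially"
  proof eventually_elim
    case (elim n)
    then have "B / 2 * \<rho> ^ n \<le> f n"
      using lower[of n] assms(2) by (simp add: field_simps)
    moreover have "0 \<le> \<rho> ^ n" using assms(3) by simp
    ultimately show ?case using assms(2) by simp
  qed
qed

lemma bigomega_power_mono:
  fixes r \<rho> :: real
  assumes "0 < r" "r \<le> \<rho>"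
  shows "(\<lambda>n. \<rho> ^ n) \<in> \<Omega>(\<lambda>n. r ^ n)"
  by (rule landau_omega.bigI[of 1]) (use assms in \<open>simp_all add: power_mono\<close>)

lemma chain_L1_bigomega_growth:
  assumes "0 < q" "q < 1" "0 < p0" "p0 < 1" "0 < p1" "p1 < 1"
    and growth: "1 < mu_plus_sigma p1 - mu_plus_sigma p0"
  shows "chain_L1 q p0 p1 \<in> \<Omega>(\<lambda>n. (mu_plus_sigma p1 - mu_plus_sigma p0) ^ n)"
proof -
  define a where "a = mu_plus_sigma p0"
  define \<rho> where "\<rho> = mu_plus_sigma p1 - mu_plus_sigma p0"
  define K where "K = (1 - q) * a + q * (\<rho> + a - 1)"
  have "0 < a" using assms(3,4) by (simp add: a_def mu_plus_sigma_def add_pos_nonneg)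
  then have "0 < K" using assms(1,2) growth unfolding K_def \<rho>_def
    by (intro add_pos_pos mult_pos_pos) simp_all
  define d where "d = \<rho> - 1"
  have "0 < d" using growth by (simp add: d_def \<rho>_def)
  show ?thesis
    unfolding \<rho>_def[symmetric]
  proof (rule bigomega_power_of_lower_bound)
    fix n
    have "d * (\<Sum>S\<in>Pow {1..n+1}. chain_fhat q p0 p1 n S) = K * \<rho> ^ (n + 1) - a"
      using sum_chain_fhat_nonroot_closed_form[OF assms(3-6)] by (simp add: a_def d_def \<rho>_def K_def)
    then have "- a / d + K * \<rho> / d * \<rho> ^ n = (\<Sum>S\<in>Pow {1..n+1}. chain_fhat q p0 p1 n S)"
      using \<open>0 < d\<close> by (simp add: field_simps)
    then show "- a / d + K * \<rho> / d * \<rho> ^ n \<le> chain_L1 q p0 p1 n"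
      using sum_nonroot_le_chain_L1 by metis
  next
    show "0 < K * \<rho> / d" using \<open>0 < K\<close> \<open>0 < d\<close> growth by (simp add: \<rho>_def)
  qed (use growth in \<open>simp add: \<rho>_def\<close>)
qed

lemma D_mu_plus_D_sigma_eq:
  assumes "p0 \<le> p1" "sqrt (p0 * (1 - p0)) \<le> sqrt (p1 * (1 - p1))"
  shows "D_mu p0 p1 + D_sigma p0 p1 = mu_plus_sigma p1 - mu_plus_sigma p0"
  using assms by (simp add: D_mu_def D_sigma_def mu_plus_sigma_def)

lemma chain_L1_bigomega_power:
  assumes "0 < q" "q < 1" "0 < p0" "p0 \<le> p1" "p1 < 1"
    and "sqrt (p0 * (1 - p0)) \<le> sqrt (p1 * (1 - p1))"
    and "0 < r" "r \<le> D_mu p0 p1 + D_sigma p0 p1" "1 < D_mu p0 p1 + D_sigma p0 p1"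
  shows "chain_L1 q p0 p1 \<in> \<Omega>(\<lambda>n. r ^ n)"
  using landau_omega.big_trans[OF chain_L1_bigomega_growth bigomega_power_mono] assms
  by (simp add: D_mu_plus_D_sigma_eq)

lemma first_family_rate:
  fixes p0 p1 :: real
  assumes p0: "p0 = 1/100000" and p1: "p1 = 0.5 + 1/100000 + 0.353"
  shows "sqrt (p0 * (1 - p0)) \<le> sqrt (p1 * (1 - p1))" and "1.2 < D_mu p0 p1 + D_sigma p0 p1"
proof -
  have "sqrt (p0 * (1 - p0)) < sqrt ((2/625) ^ 2)"
    by (rule real_sqrt_less_mono) (simp add: p0 power2_eq_square)
  then have \<sigma>0: "sqrt (p0 * (1 - p0)) < 2/625" by simp
  have \<sigma>1: "177/500 < sqrt (p1 * (1 - p1))"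
    by (rule real_less_rsqrt) (simp add: p1 power2_eq_square)
  from \<sigma>0 \<sigma>1 show \<sigma>: "sqrt (p0 * (1 - p0)) \<le> sqrt (p1 * (1 - p1))" by linarith
  have "p1 - p0 = 853/1000" by (simp add: p0 p1)
  then show "1.2 < D_mu p0 p1 + D_sigma p0 p1"
    using \<sigma>0 \<sigma>1 \<sigma> by (simp add: D_mu_def D_sigma_def)
qed

lemma second_family_rate:
  fixes c p1 :: real
  assumes "0 < c" "c \<le> 0.0246" and p1: "p1 = 0.5 + c + 2 * sqrt c"
  shows "p1 < 1" and "sqrt (c * (1 - c)) \<le> sqrt (p1 * (1 - p1))"
    and "1 + c < D_mu c p1 + D_sigma c p1"
proof -
  define s where "s = sqrt c"
  have "0 < s" using assms by (simp add: s_def)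
  have c: "c = s ^ 2" using assms by (simp add: s_def)
  have p1s: "p1 = 0.5 + s ^ 2 + 2 * s" using assms(1) by (simp add: p1 s_def)
  have "s \<le> sqrt (0.1569 ^ 2)" unfolding s_def
    by (rule real_sqrt_le_mono) (use assms in \<open>simp add: power2_eq_square\<close>)
  then have "s \<le> 0.1569" by simp
  have "s ^ 3 \<le> 0.1569 * 0.0246"
    using \<open>s \<le> 0.1569\<close> \<open>0 < s\<close> assms(2) c mult_mono[of s "0.1569" "s ^ 2" "0.0246"]
    by (simp add: power3_eq_cube power2_eq_square)
  then have "s * (1 - (6 * s + 2 * s ^ 2 + 2 * s ^ 3)) > 0"
    using \<open>s \<le> 0.1569\<close> \<open>0 < s\<close> assms(2) c by simp
  moreover have "p1 * (1 - p1) - (0.5 - s + s ^ 2) ^ 2 = s * (1 - (6 * s + 2 * s ^ 2 + 2 * s ^ 3))"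
    unfolding p1s by (simp add: power2_eq_square power3_eq_cube algebra_simps)
  ultimately have \<sigma>1: "0.5 - s + s ^ 2 < sqrt (p1 * (1 - p1))"
    by (intro real_less_rsqrt) simp
  have "sqrt (c * (1 - c)) \<le> sqrt (s ^ 2)"
    by (rule real_sqrt_le_mono) (use assms c in \<open>simp add: algebra_simps\<close>)
  then have \<sigma>0: "sqrt (c * (1 - c)) \<le> s" using \<open>0 < s\<close> by simp
  show "p1 < 1" using \<open>s \<le> 0.1569\<close> assms(2) unfolding p1s c by simp
  have "s \<le> 0.5 - s + s ^ 2" using \<open>s \<le> 0.1569\<close> by (simp add: add_increasing2)
  then show \<sigma>: "sqrt (c * (1 - c)) \<le> sqrt (p1 * (1 - p1))" using \<sigma>0 \<sigma>1 by linarith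
  have "c \<le> p1" using \<open>0 < s\<close> unfolding p1s c by simp
  then show "1 + c < D_mu c p1 + D_sigma c p1"
    using \<sigma> \<sigma>0 \<sigma>1 c unfolding D_mu_def D_sigma_def p1s by simp
qed

theorem mainTheorem10:
  fixes q :: real
  assumes "0 < q" and "q < 1"
  shows "(let p0 = (1/100000 :: real); p1 = 0.5 + 1/100000 + 0.353 in
            D_mu p0 p1 + D_sigma p0 p1 > 1.2 \<and>
            (\<lambda>n. chain_L1 q p0 p1 n) \<in> \<Omega>(\<lambda>n. (1.2::real) ^ n))
       \<and> (\<forall>c::real. 0 < c \<and> c \<le> 0.0246 \<longrightarrow>
            (let p0 = c; p1 = 0.5 + c + 2 * sqrt c in
              D_mu p0 p1 + D_sigma p0 p1 > 1 + c \<and>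
              (\<lambda>n. chain_L1 q p0 p1 n) \<in> \<Omega>(\<lambda>n. (1 + c) ^ n)))"
  unfolding Let_def
proof (intro conjI allI impI)
  note first = first_family_rate[OF refl refl]
  show "1.2 < D_mu (1/100000) (0.5 + 1/100000 + 0.353) + D_sigma (1/100000) (0.5 + 1/100000 + 0.353)"
    by (fact first(2))
  show "chain_L1 q (1/100000) (0.5 + 1/100000 + 0.353) \<in> \<Omega>(\<lambda>n. 1.2 ^ n)"
    by (rule chain_L1_bigomega_power) (use assms first in simp_all)
next
  fix c :: real
  assume "0 < c \<and> c \<le> 0.0246"
  note second = second_family_rate[of c, OF _ _ refl]
  show "1 + c < D_mu c (0.5 + c + 2 * sqrt c) + D_sigma c (0.5 + c + 2 * sqrt c)"
    using second \<open>0 < c \<and> c \<le> 0.0246\<close> by blast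
  show "chain_L1 q c (0.5 + c + 2 * sqrt c) \<in> \<Omega>(\<lambda>n. (1 + c) ^ n)"
    by (rule chain_L1_bigomega_power) (use assms second \<open>0 < c \<and> c \<le> 0.0246\<close> in auto)
qed

end
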